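(* Let $n_1,\dots,n_p\in\mathbb Z$ with exactly $k$ of the $n_i$ odd. Then, in Bipartite Influence, $$-k-4\leq Rs(S_{n_1}+\dots+S_{n_p})\leq Ls(S_{n_1}+\dots+S_{n_p})\leq k+4.$$
   Context: Bipartite Influence: on a bipartite graph with black and white vertices (edges between colours), isolated vertices are credited to the owner of their colour (black to Left, white to Right); Left picks a black vertex $x$ and removes $x$, its neighbours and the vertices that become isolated (credited to her); Right likewise with white vertices; score = Left's total minus Right's; $Ls$, $Rs$ are the optimal scores when Left, resp. Right, moves first. The sum $+$ of positions is their disjoint union. Segments: for $n\geq 1$, $S_n$ is the path $v_1\cdots v_n$ with $v_i$ black iff $i$ odd; $S_{-n}$ is the path $v_1\cdots v_n$ with $v_i$ white iff $i$ odd; $S_0$ is the empty graph. *)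

theory Defs
  imports Main
begin

record 'a bgraph =
  verts :: "'a set"
  blk   :: "'a \<Rightarrow> bool"
  adj   :: "'a \<Rightarrow> 'a \<Rightarrow> bool"

definition isolated :: "'a bgraph \<Rightarrow> 'a set \<Rightarrow> 'a \<Rightarrow> bool" where
  "isolated G U v \<longleftrightarrow> (\<forall>w\<in>U. \<not> adj G v w)"

definition nbhd :: "'a bgraph \<Rightarrow> 'a set \<Rightarrow> 'a \<Rightarrow> 'a set" where
  "nbhd G U x = {y \<in> U. y = x \<or> adj G x y}"

text \<open>Vertices removed (and credited to the mover) when x is played in U:
  x, its neighbours, and the vertices that become isolated.\<close>
definition removed :: "'a bgraph \<Rightarrow> 'a set \<Rightarrow> 'a \<Rightarrow> 'a set" where
  "removed G U x = nbhd G U x \<union> {v \<in> U - nbhd G U x. isolated G (U - nbhd G U x) v}"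

text \<open>Non-isolated part of U and the credit of the isolated vertices (black to Left,
  white to Right).\<close>
definition core :: "'a bgraph \<Rightarrow> 'a set \<Rightarrow> 'a set" where
  "core G U = {v \<in> U. \<not> isolated G U v}"

definition credit :: "'a bgraph \<Rightarrow> 'a set \<Rightarrow> int" where
  "credit G U = int (card {v \<in> U. isolated G U v \<and> blk G v})
              - int (card {v \<in> U. isolated G U v \<and> \<not> blk G v})"

text \<open>Optimal remaining score (Left minus Right) with Left (gL) resp. Right (gR) to move,
  on a position U without isolated vertices; the nat argument is fuel (card U suffices,
  every move removes at least one vertex).\<close>
fun gL :: "'a bgraph \<Rightarrow> nat \<Rightarrow> 'a set \<Rightarrow> int"
and gR :: "'a bgraph \<Rightarrow> nat \<Rightarrow> 'a set \<Rightarrow> int" where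
  "gL G 0 U = 0"
| "gL G (Suc n) U =
     (if \<exists>x\<in>U. blk G x
      then Max ((\<lambda>x. int (card (removed G U x)) + gR G n (U - removed G U x))
                 ` {x \<in> U. blk G x})
      else 0)"
| "gR G 0 U = 0"
| "gR G (Suc n) U =
     (if \<exists>y\<in>U. \<not> blk G y
      then Min ((\<lambda>y. - int (card (removed G U y)) + gL G n (U - removed G U y))
                 ` {y \<in> U. \<not> blk G y})
      else 0)"

definition Ls :: "'a bgraph \<Rightarrow> int" where
  "Ls G = credit G (verts G) + gL G (card (verts G)) (core G (verts G))"

definition Rs :: "'a bgraph \<Rightarrow> int" where
  "Rs G = credit G (verts G) + gR G (card (verts G)) (core G (verts G))"

text \<open>Segment S_n on vertices 1..|n|: for n \<ge> 1 vertex i is black iff i odd,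
  for n \<le> -1 vertex i is white iff i odd; S_0 is empty.\<close>
definition segment :: "int \<Rightarrow> nat bgraph" where
  "segment n = \<lparr> verts = {1..nat \<bar>n\<bar>},
                 blk = (\<lambda>i. if n \<ge> 0 then odd i else even i),
                 adj = (\<lambda>i j. i \<in> {1..nat \<bar>n\<bar>} \<and> j \<in> {1..nat \<bar>n\<bar>} \<and> (j = i + 1 \<or> i = j + 1)) \<rparr>"

definition gsum :: "'a bgraph list \<Rightarrow> (nat \<times> 'a) bgraph" where
  "gsum Gs = \<lparr> verts = {(i, v). i < length Gs \<and> v \<in> verts (Gs ! i)},
               blk = (\<lambda>(i, v). blk (Gs ! i) v),
               adj = (\<lambda>(i, v) (j, w). i = j \<and> i < length Gs \<and> adj (Gs ! i) v w) \<rparr>"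

end

theory Submission
  imports Defs
begin

text \<open>
  Positions are sets of vertices without isolated ones; \<open>Ls\<close> and \<open>Rs\<close> add the credit
  of the initially isolated vertices (the segments \<open>S\<^sub>1\<close> and \<open>S\<^sub>-\<^sub>1\<close>) to the values of the
  remaining position.

  \<open>Rs \<le> Ls\<close> holds on every bipartite graph: by induction on the position one shows, together
  with it, that an extra move of Right never benefits Right, whoever is to move.

  On a disjoint union of paths the value with Left to move is at most the potential: the number
  of maximal runs of odd length plus a bonus of 4, 2 or 0, according to whether some run has at
  least three vertices, the position is otherwise nonempty, or it is empty. A move of Left scores
  at most the bonus plus the decrease of the number of odd runs, and Right can always answer with
  a vertex near an end of a run that scores at least the bonus plus the increase. The same bound
  for the graph with swapped colours bounds the value with Right to move from below. Initially the
  odd runs are the odd segments with at least three vertices and the credit is at most the number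
  of segments with one vertex, so together they are counted by \<open>k\<close>.
\<close>

section \<open>Optimal values\<close>

definition play :: "'a bgraph \<Rightarrow> 'a set \<Rightarrow> 'a \<Rightarrow> 'a set" where
  "play G U x = U - removed G U x"

lemma removed_subset: "removed G U x \<subseteq> U"
  unfolding removed_def nbhd_def by auto

lemma play_subset: "play G U x \<subseteq> U"
  unfolding play_def by auto

lemma play_eq_core: "play G U x = core G (U - nbhd G U x)"
  unfolding play_def removed_def core_def nbhd_def by auto

lemma core_mono: "X \<subseteq> Y \<Longrightarrow> core G X \<subseteq> core G Y"
  unfolding core_def isolated_def by blast

lemma core_subset: "core G X \<subseteq> X"
  unfolding core_def by blast

lemma finite_play: "finite U \<Longrightarrow> finite (play G U x)"
  using finite_subset[OF play_subset] .

lemma card_play_less: "finite U \<Longrightarrow> x \<in> U \<Longrightarrow> card (play G U x) < card U"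
  unfolding play_def removed_def nbhd_def by (intro psubset_card_mono) auto

lemma card_removed:
  "finite U \<Longrightarrow> int (card (removed G U x)) = int (card U) - int (card (play G U x))"
  unfolding play_def using removed_subset[of G U x]
  by (simp add: card_Diff_subset finite_subset card_mono)

lemma gL_gR_fuel_independent:
  assumes "finite U" "card U \<le> m" "card U \<le> n"
  shows "gL G m U = gL G n U \<and> gR G m U = gR G n U"
  using assms
proof (induction m arbitrary: n U)
  case 0
  then show ?case by (cases n) auto
next
  case (Suc m)
  show ?case
  proof (cases "U = {}")
    case True
    then show ?thesis by (cases n) auto
  next
    case False
    with Suc.prems obtain n' where n: "n = Suc n'"
      by (cases n) auto
    have IH: "gR G m (U - removed G U x) = gR G n' (U - removed G U x) \<and>
              gL G m (U - removed G U x) = gL G n' (U - removed G U x)" if "x \<in> U" for x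
      using Suc.IH[of "U - removed G U x" n'] Suc.prems n card_play_less[OF Suc.prems(1) that, of G]
      unfolding play_def by auto
    have "(\<lambda>x. int (card (removed G U x)) + gR G m (U - removed G U x)) ` {x \<in> U. blk G x}
        = (\<lambda>x. int (card (removed G U x)) + gR G n' (U - removed G U x)) ` {x \<in> U. blk G x}"
      "(\<lambda>x. - int (card (removed G U x)) + gL G m (U - removed G U x)) ` {x \<in> U. \<not> blk G x}
        = (\<lambda>x. - int (card (removed G U x)) + gL G n' (U - removed G U x)) ` {x \<in> U. \<not> blk G x}"
      by (auto intro!: image_cong simp: IH)
    then show ?thesis
      using n by (simp del: gL.simps gR.simps add: gL.simps(2) gR.simps(2))
  qed
qed

definition left_value :: "'a bgraph \<Rightarrow> 'a set \<Rightarrow> int" where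
  "left_value G U = gL G (card U) U"

definition right_value :: "'a bgraph \<Rightarrow> 'a set \<Rightarrow> int" where
  "right_value G U = gR G (card U) U"

lemma left_value_unfold:
  assumes "finite U"
  shows "left_value G U = (if \<exists>x\<in>U. blk G x
     then Max ((\<lambda>x. int (card (removed G U x)) + right_value G (play G U x)) ` {x \<in> U. blk G x})
     else 0)"
proof (cases "\<exists>x\<in>U. blk G x")
  case True
  then obtain m where m: "card U = Suc m"
    using assms by (cases "card U") auto
  have "gR G m (play G U x) = right_value G (play G U x)" if "x \<in> U" for x
    using gL_gR_fuel_independent[of "play G U x" m "card (play G U x)" G]
      card_play_less[OF assms that, of G] m finite_play[OF assms]
    unfolding right_value_def by auto
  then show ?thesis
    using True m unfolding left_value_def play_def by (auto intro!: arg_cong[where f = Max])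
next
  case False
  then show ?thesis
    unfolding left_value_def by (cases "card U") auto
qed

definition swap_colours :: "'a bgraph \<Rightarrow> 'a bgraph" where
  "swap_colours G = G\<lparr>blk := (\<lambda>v. \<not> blk G v)\<rparr>"

lemma swap_colours_simps [simp]:
  "verts (swap_colours G) = verts G" "adj (swap_colours G) = adj G"
  "blk (swap_colours G) v \<longleftrightarrow> \<not> blk G v"
  unfolding swap_colours_def by simp_all

lemma swap_colours_swap_colours [simp]: "swap_colours (swap_colours G) = G"
  unfolding swap_colours_def by simp

lemma removed_swap_colours [simp]: "removed (swap_colours G) U x = removed G U x"
  unfolding removed_def nbhd_def isolated_def by simp

lemma core_swap_colours [simp]: "core (swap_colours G) U = core G U"
  unfolding core_def isolated_def by simp

lemma play_swap_colours [simp]: "play (swap_colours G) U x = play G U x"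
  unfolding play_def by simp

lemma gL_swap_colours: "finite U \<Longrightarrow> gL (swap_colours G) n U = - gR G n U"
proof (induction n arbitrary: G U)
  case 0
  then show ?case by simp
next
  case (Suc n)
  have IH: "gR (swap_colours G) n (U - removed G U x) = - gL G n (U - removed G U x)" for x
    using Suc.IH[of "U - removed G U x" "swap_colours G"] Suc.prems by simp
  let ?S = "{x \<in> U. \<not> blk G x}"
  let ?v = "\<lambda>x. - int (card (removed G U x)) + gL G n (U - removed G U x)"
  show ?case
  proof (cases "?S = {}")
    case False
    have "gL (swap_colours G) (Suc n) U = Max (uminus ` ?v ` ?S)"
      using False by (auto simp: IH image_image)
    also have "\<dots> = - Min (?v ` ?S)"
      using False Suc.prems by (simp del: minus_Min_eq_Max add: minus_Min_eq_Max[symmetric])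
    also have "\<dots> = - gR G (Suc n) U"
      using False by auto
    finally show ?thesis .
  qed auto
qed

lemma left_value_swap_colours: "finite U \<Longrightarrow> left_value (swap_colours G) U = - right_value G U"
  unfolding left_value_def right_value_def by (rule gL_swap_colours)

lemma right_value_swap_colours: "finite U \<Longrightarrow> right_value (swap_colours G) U = - left_value G U"
  using left_value_swap_colours[of U "swap_colours G"] by simp

lemma left_value_no_black: "finite U \<Longrightarrow> \<forall>x\<in>U. \<not> blk G x \<Longrightarrow> left_value G U = 0"
  by (simp add: left_value_unfold)

lemma left_value_ge:
  "finite U \<Longrightarrow> x \<in> U \<Longrightarrow> blk G x \<Longrightarrow>
    int (card (removed G U x)) + right_value G (play G U x) \<le> left_value G U"
  by (subst left_value_unfold) (auto intro!: Max_ge)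

lemma left_value_attained:
  assumes "finite U" "\<exists>x\<in>U. blk G x"
  obtains x where "x \<in> U" "blk G x"
    "left_value G U = int (card (removed G U x)) + right_value G (play G U x)"
proof -
  let ?A = "(\<lambda>x. int (card (removed G U x)) + right_value G (play G U x)) ` {x \<in> U. blk G x}"
  have "Max ?A \<in> ?A"
    using assms by (intro Max_in) auto
  then show thesis
    using that assms by (auto simp: left_value_unfold[OF assms(1)])
qed

lemma right_value_no_white: "finite U \<Longrightarrow> \<forall>y\<in>U. blk G y \<Longrightarrow> right_value G U = 0"
  using left_value_no_black[of U "swap_colours G"] by (simp add: left_value_swap_colours)

lemma right_value_le:
  "finite U \<Longrightarrow> y \<in> U \<Longrightarrow> \<not> blk G y \<Longrightarrow>
    right_value G U \<le> - int (card (removed G U y)) + left_value G (play G U y)"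
  using left_value_ge[of U y "swap_colours G"]
  by (simp add: left_value_swap_colours right_value_swap_colours finite_play)

lemma right_value_attained:
  assumes "finite U" "\<exists>y\<in>U. \<not> blk G y"
  obtains y where "y \<in> U" "\<not> blk G y"
    "right_value G U = - int (card (removed G U y)) + left_value G (play G U y)"
proof -
  obtain y where "y \<in> U" "\<not> blk G y" and
    "left_value (swap_colours G) U
       = int (card (removed G U y)) + right_value (swap_colours G) (play G U y)"
    using left_value_attained[of U "swap_colours G"] assms by auto
  then show thesis
    using that assms(1) by (simp add: left_value_swap_colours right_value_swap_colours finite_play)
qed

lemma values_ge_neg_card:
  "finite U \<Longrightarrow> - int (card U) \<le> left_value G U \<and> - int (card U) \<le> right_value G U"
proof (induction "card U" arbitrary: U rule: less_induct)
  case less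
  have IH: "- int (card (play G U x)) \<le> left_value G (play G U x)"
    "- int (card (play G U x)) \<le> right_value G (play G U x)" if "x \<in> U" for x
    using less.hyps[OF card_play_less[OF less.prems that] finite_play[OF less.prems]] by auto
  have card_play: "card (play G U x) \<le> card U" for x
    using card_mono[OF less.prems play_subset] .
  have "- int (card U) \<le> left_value G U"
  proof (cases "\<exists>x\<in>U. blk G x")
    case True
    then obtain x where "x \<in> U" "blk G x" by blast
    with left_value_ge[OF less.prems this] IH card_play[of x] card_removed[OF less.prems, of G x]
    show ?thesis by fastforce
  qed (simp add: left_value_no_black less.prems)
  moreover have "- int (card U) \<le> right_value G U"
  proof (cases "\<exists>y\<in>U. \<not> blk G y")
    case True
    then obtain y where "y \<in> U"
      "right_value G U = - int (card (removed G U y)) + left_value G (play G U y)"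
      using right_value_attained[OF less.prems] by metis
    with IH card_removed[OF less.prems, of G y] show ?thesis by fastforce
  qed (simp add: right_value_no_white less.prems)
  ultimately show ?case ..
qed

lemma Ls_Rs_eq_values:
  assumes "finite (verts G)"
  shows "Ls G = credit G (verts G) + left_value G (core G (verts G))"
    and "Rs G = credit G (verts G) + right_value G (core G (verts G))"
proof -
  have "finite (core G (verts G))"
    using finite_subset[OF core_subset assms] .
  moreover have "card (core G (verts G)) \<le> card (verts G)"
    using card_mono[OF assms core_subset] .
  ultimately have "gL G (card (verts G)) (core G (verts G)) = left_value G (core G (verts G))"
    "gR G (card (verts G)) (core G (verts G)) = right_value G (core G (verts G))"
    unfolding left_value_def right_value_def using gL_gR_fuel_independent by blast+
  then show "Ls G = credit G (verts G) + left_value G (core G (verts G))"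
    "Rs G = credit G (verts G) + right_value G (core G (verts G))"
    unfolding Ls_def Rs_def by simp_all
qed

section \<open>No zugzwang in bipartite graphs\<close>

lemma card_add_le_of_inter_subset:
  assumes "finite U" "A \<subseteq> U" "B \<subseteq> U" "A \<inter> B \<subseteq> C" "finite C"
  shows "card A + card B \<le> card U + card C"
proof -
  have "card A + card B = card (A \<union> B) + card (A \<inter> B)"
    using assms(1-3) card_Un_Int[of A B] finite_subset by metis
  also have "\<dots> \<le> card U + card C"
    using assms by (intro add_mono card_mono) auto
  finally show ?thesis .
qed

text \<open>Since \<open>- card (removed G U y) = card (play G U y) - card U\<close>, the inequality says that
  an extra move of Right never benefits Right.\<close>

definition right_moves_useless :: "('a bgraph \<Rightarrow> 'a set \<Rightarrow> int) \<Rightarrow> 'a bgraph \<Rightarrow> 'a set \<Rightarrow> bool"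
  where "right_moves_useless val G U \<longleftrightarrow> (\<forall>y\<in>U. \<not> blk G y \<longrightarrow>
    val G (play G U y) + int (card (play G U y)) \<le> val G U + int (card U))"

locale bipartite_graph =
  fixes G :: "'a bgraph"
  assumes adj_sym: "adj G u v \<Longrightarrow> adj G v u"
    and adj_colours: "adj G u v \<Longrightarrow> blk G u \<noteq> blk G v"
begin

lemma core_core_diff: "core G (core G X - S) = core G (X - S)"
proof
  show "core G (core G X - S) \<subseteq> core G (X - S)"
    by (rule core_mono) (use core_subset[of G X] in blast)
  show "core G (X - S) \<subseteq> core G (core G X - S)"
  proof
    fix v assume "v \<in> core G (X - S)"
    then obtain w where "v \<in> X - S" "w \<in> X - S" "adj G v w"
      unfolding core_def isolated_def by blast
    with adj_sym show "v \<in> core G (core G X - S)"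
      unfolding core_def isolated_def by blast
  qed
qed

lemma core_idem: "core G (core G X) = core G X"
  using core_core_diff[of X "{}"] by simp

lemma core_play: "core G (play G U x) = play G U x"
  by (simp add: play_eq_core core_idem)

lemma core_monochromatic_empty:
  assumes "core G W = W" "\<forall>x\<in>W. blk G x = c"
  shows "W = {}"
proof (rule ccontr)
  assume "W \<noteq> {}"
  then obtain v w where "v \<in> W" "w \<in> W" "adj G v w"
    using assms(1) unfolding core_def isolated_def by blast
  with assms(2) adj_colours show False
    by blast
qed

lemma play_play: "play G (play G U z) w = core G (U - nbhd G U z - nbhd G U w)"
proof -
  have "play G U z - nbhd G (play G U z) w = play G U z - nbhd G U w"
    using play_subset[of G U z] unfolding nbhd_def by blast
  then have "play G (play G U z) w = core G (play G U z - nbhd G U w)"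
    unfolding play_eq_core[of G "play G U z" w] by simp
  also have "\<dots> = core G (U - nbhd G U z - nbhd G U w)"
    by (simp add: play_eq_core core_core_diff)
  finally show ?thesis .
qed

lemma play_commute: "play G (play G U z) w = play G (play G U w) z"
proof -
  have "U - nbhd G U z - nbhd G U w = U - nbhd G U w - nbhd G U z"
    by blast
  then show ?thesis
    by (simp only: play_play)
qed

lemma core_remove_isolated: "isolated G X w \<Longrightarrow> core G (X - {w}) = core G X"
  using adj_sym unfolding core_def isolated_def by blast

lemma play_absorb:
  assumes w: "w \<in> U" "w \<notin> nbhd G U z" "w \<notin> play G U z"
  shows "play G (play G U w) z = play G U z"
proof -
  have w_isolated: "isolated G (U - nbhd G U z) w"
    using w unfolding play_eq_core core_def by blast
  have "play G (play G U w) z = play G (play G U z) w"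
    by (rule play_commute)
  also have "\<dots> = core G (U - nbhd G U z - nbhd G U w)"
    by (rule play_play)
  also have "U - nbhd G U z - nbhd G U w = U - nbhd G U z - {w}"
    using w_isolated w(1) unfolding nbhd_def isolated_def by blast
  also have "core G \<dots> = play G U z"
    using core_remove_isolated[OF w_isolated] by (simp only: play_eq_core)
  finally show ?thesis .
qed

lemma not_in_nbhd_of_play:
  assumes "x \<in> play G U y"
  shows "y \<notin> nbhd G U x"
proof -
  have "x \<noteq> y" "\<not> adj G y x"
    using assms unfolding play_eq_core core_def nbhd_def by auto
  then show ?thesis
    using adj_sym unfolding nbhd_def by blast
qed

lemma same_colour_not_in_nbhd: "blk G y = blk G x \<Longrightarrow> y \<noteq> x \<Longrightarrow> y \<notin> nbhd G U x"
  unfolding nbhd_def by (auto dest: adj_colours)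

lemma neighbour_not_in_nbhd:
  assumes "v \<in> U" "v \<notin> nbhd G U y" "adj G v w" "blk G w = blk G y"
  shows "w \<notin> nbhd G U y"
proof
  assume "w \<in> nbhd G U y"
  then have "w = y"
    using assms(4) same_colour_not_in_nbhd by blast
  then show False
    using assms(1-3) adj_sym unfolding nbhd_def by blast
qed

lemma play_inter_subset:
  assumes x: "blk G x" and y: "\<not> blk G y"
  shows "play G U y \<inter> play G U x \<subseteq> play G (play G U x) y"
proof
  fix v assume v: "v \<in> play G U y \<inter> play G U x"
  then have v_rest: "v \<in> U - nbhd G U x - nbhd G U y"
    by (auto simp: play_eq_core core_def)
  have "\<exists>w \<in> U - nbhd G U x - nbhd G U y. adj G v w"
  proof (cases "blk G v")
    case True
    then obtain w where "w \<in> U - nbhd G U x" "adj G v w" "blk G w = blk G y"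
      using v y adj_colours unfolding play_eq_core core_def isolated_def by blast
    with v_rest neighbour_not_in_nbhd[of v U y w] show ?thesis
      by blast
  next
    case False
    then obtain w where "w \<in> U - nbhd G U y" "adj G v w" "blk G w = blk G x"
      using v x adj_colours unfolding play_eq_core core_def isolated_def by blast
    with v_rest neighbour_not_in_nbhd[of v U x w] show ?thesis
      by blast
  qed
  with v_rest show "v \<in> play G (play G U x) y"
    unfolding play_play core_def isolated_def by blast
qed

lemma play_play_if:
  assumes "y \<in> U" "y \<notin> nbhd G U y' \<or> y = y'"
  shows "play G (play G U y) y' = (if y \<in> play G U y' then play G (play G U y') y else play G U y')"
proof (cases "y \<in> play G U y'")
  case True
  then show ?thesis
    by (simp add: play_commute)
next
  case False
  show ?thesis
  proof (cases "y = y'")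
    case True
    have "nbhd G (play G U y) y = {}"
      using adj_sym unfolding play_eq_core core_def nbhd_def by blast
    then have "play G (play G U y) y = play G U y"
      unfolding play_eq_core[of G "play G U y" y] by (simp add: core_play)
    with True False show ?thesis
      by simp
  next
    case False
    then show ?thesis
      using play_absorb[OF assms(1)] assms(2) \<open>y \<notin> play G U y'\<close> by simp
  qed
qed

lemma left_value_right_moves_useless:
  assumes fin: "finite U"
    and IH: "\<And>x. x \<in> U \<Longrightarrow> right_moves_useless right_value G (play G U x)"
  shows "right_moves_useless left_value G U"
  unfolding right_moves_useless_def
proof (intro ballI impI)
  fix y assume y: "y \<in> U" "\<not> blk G y"
  define W where "W = play G U y"
  have finW: "finite W" and W_le: "card W \<le> card U"
    unfolding W_def using finite_play[OF fin] card_mono[OF fin play_subset] by auto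
  show "left_value G W + int (card W) \<le> left_value G U + int (card U)"
  proof (cases "\<exists>x\<in>W. blk G x")
    case False
    then have "W = {}"
      using core_monochromatic_empty[of W False] core_play unfolding W_def by auto
    then show ?thesis
      using values_ge_neg_card[OF fin, of G] by (simp add: left_value_no_black)
  next
    case True
    obtain x where x: "x \<in> W" "blk G x"
      and val_W: "left_value G W = int (card (removed G W x)) + right_value G (play G W x)"
      by (rule left_value_attained[OF finW True])
    have xU: "x \<in> U"
      using x(1) play_subset[of G U y] unfolding W_def by blast
    define V where "V = play G U x"
    have val_U: "int (card U) - int (card V) + right_value G V \<le> left_value G U"
      using left_value_ge[OF fin xU x(2)] card_removed[OF fin] unfolding V_def by simp
    have WV: "play G W x = (if y \<in> V then play G V y else V)"
      using play_play_if[OF y(1)] not_in_nbhd_of_play x(1) unfolding W_def V_def by simp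
    show ?thesis
    proof (cases "y \<in> V")
      case True
      have "right_value G (play G V y) + int (card (play G V y)) \<le> right_value G V + int (card V)"
        using IH[OF xU] True y(2) unfolding right_moves_useless_def V_def by blast
      moreover have "card W + card V \<le> card U + card (play G V y)"
        using play_inter_subset[OF x(2) y(2)] play_subset[of G U y] play_subset[of G U x] fin
          finite_play[OF finite_play[OF fin]]
        unfolding W_def V_def by (intro card_add_le_of_inter_subset) auto
      ultimately show ?thesis
        using val_W val_U card_removed[OF finW, of G x] True unfolding WV by simp
    next
      case False
      then show ?thesis
        using val_W val_U W_le card_removed[OF finW, of G x] unfolding WV by simp
    qed
  qed
qed

lemma right_value_right_moves_useless:
  assumes fin: "finite U"
    and IH: "\<And>y. y \<in> U \<Longrightarrow> right_moves_useless left_value G (play G U y)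
                        \<and> right_value G (play G U y) \<le> left_value G (play G U y)"
  shows "right_moves_useless right_value G U"
  unfolding right_moves_useless_def
proof (intro ballI impI)
  fix y assume y: "y \<in> U" "\<not> blk G y"
  define W where "W = play G U y"
  have finW: "finite W"
    unfolding W_def using finite_play[OF fin] .
  obtain y' where y': "y' \<in> U" "\<not> blk G y'"
    and val_U: "right_value G U = - int (card (removed G U y')) + left_value G (play G U y')"
    using right_value_attained[OF fin] y by blast
  define V where "V = play G U y'"
  have val_U': "right_value G U + int (card U) = left_value G V + int (card V)"
    using val_U card_removed[OF fin, of G y'] unfolding V_def by linarith
  have V_useless: "left_value G (play G V y) + int (card (play G V y)) \<le> left_value G V + int (card V)"
    if "y \<in> V"
    using IH[OF y'(1)] that y(2) unfolding right_moves_useless_def V_def by blast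
  have "y \<notin> nbhd G U y' \<or> y = y'" "y' \<notin> nbhd G U y \<or> y' = y"
    using same_colour_not_in_nbhd y(2) y'(2) by blast+
  then have WV: "play G W y' = (if y \<in> V then play G V y else V)"
    and VW: "play G V y = (if y' \<in> W then play G W y' else W)"
    using play_play_if[OF y(1)] play_play_if[OF y'(1)] unfolding W_def V_def by simp_all
  show "right_value G W + int (card W) \<le> right_value G U + int (card U)"
  proof (cases "y' \<in> W")
    case True
    have "right_value G W + int (card W) \<le> left_value G (play G W y') + int (card (play G W y'))"
      using right_value_le[OF finW True y'(2)] card_removed[OF finW, of G y'] by linarith
    with V_useless WV val_U' show ?thesis
      by (cases "y \<in> V") auto
  next
    case False
    have "left_value G W + int (card W) \<le> left_value G V + int (card V)"
    proof (cases "y \<in> V")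
      case True
      with V_useless VW False show ?thesis
        by simp
    next
      case False
      then have "V = W"
        using WV VW \<open>y' \<notin> W\<close> play_subset by (metis subset_antisym)
      then show ?thesis
        by simp
    qed
    then show ?thesis
      using IH[OF y(1)] val_U' unfolding W_def by linarith
  qed
qed

lemma right_value_le_left_value_if_useless:
  assumes "finite U" "core G U = U" "right_moves_useless left_value G U"
  shows "right_value G U \<le> left_value G U"
proof (cases "\<exists>y\<in>U. \<not> blk G y")
  case True
  then obtain y where "y \<in> U" "\<not> blk G y"
    "right_value G U = - int (card (removed G U y)) + left_value G (play G U y)"
    using right_value_attained[OF assms(1)] by blast
  with assms show ?thesis
    using card_removed[OF assms(1), of G y] unfolding right_moves_useless_def by fastforce
next
  case False
  then have "U = {}"
    using core_monochromatic_empty[OF assms(2), of True] by simp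
  then show ?thesis
    by (simp add: left_value_no_black right_value_no_white)
qed

lemma no_zugzwang:
  "finite U \<Longrightarrow> core G U = U \<Longrightarrow> right_moves_useless left_value G U
     \<and> right_moves_useless right_value G U \<and> right_value G U \<le> left_value G U"
proof (induction "card U" arbitrary: U rule: less_induct)
  case less
  have IH: "right_moves_useless left_value G (play G U x)
      \<and> right_moves_useless right_value G (play G U x)
      \<and> right_value G (play G U x) \<le> left_value G (play G U x)" if "x \<in> U" for x
    using less.hyps[OF card_play_less[OF less.prems(1) that] finite_play[OF less.prems(1)] core_play] .
  then have "right_moves_useless left_value G U"
    using left_value_right_moves_useless[OF less.prems(1)] by blast
  moreover have "right_moves_useless right_value G U"
    using right_value_right_moves_useless[OF less.prems(1)] IH by blast
  ultimately show ?case
    using right_value_le_left_value_if_useless[OF less.prems] by blast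
qed

lemma right_value_le_left_value: "finite U \<Longrightarrow> core G U = U \<Longrightarrow> right_value G U \<le> left_value G U"
  using no_zugzwang by blast

end

section \<open>Runs\<close>

text \<open>The vertex \<open>(i, t)\<close> is the \<open>t\<close>-th vertex of the \<open>i\<close>-th path.\<close>

definition path_adj :: "nat \<times> nat \<Rightarrow> nat \<times> nat \<Rightarrow> bool" where
  "path_adj u v \<longleftrightarrow> fst u = fst v \<and> (snd v = Suc (snd u) \<or> snd u = Suc (snd v))"

definition path_core :: "(nat \<times> nat) set \<Rightarrow> (nat \<times> nat) set" where
  "path_core U = {v \<in> U. \<exists>w\<in>U. path_adj v w}"

definition separated :: "(nat \<times> nat) set \<Rightarrow> (nat \<times> nat) set \<Rightarrow> bool" where
  "separated X Y \<longleftrightarrow> (\<forall>u\<in>X. \<forall>v\<in>Y. \<not> path_adj u v)"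

definition interval :: "nat \<Rightarrow> nat \<Rightarrow> nat \<Rightarrow> (nat \<times> nat) set" where
  "interval i a b = {p. fst p = i \<and> a \<le> snd p \<and> snd p \<le> b}"

definition is_run :: "(nat \<times> nat) set \<Rightarrow> nat \<Rightarrow> nat \<Rightarrow> nat \<Rightarrow> bool" where
  "is_run U i a b \<longleftrightarrow> a \<le> b \<and> interval i a b \<subseteq> U \<and> (a = 0 \<or> (i, a - 1) \<notin> U) \<and> (i, Suc b) \<notin> U"

definition runs :: "(nat \<times> nat) set \<Rightarrow> (nat \<times> nat \<times> nat) set" where
  "runs U = {(i, a, b). is_run U i a b}"

text \<open>A run \<open>(i, a, b)\<close> has \<open>b - a + 1\<close> vertices, so \<open>odd_runs\<close> counts the runs of odd length.\<close>

definition odd_runs :: "(nat \<times> nat) set \<Rightarrow> nat" where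
  "odd_runs U = card (runs U \<inter> {(i, a, b). even (b - a)})"

definition has_long_run :: "(nat \<times> nat) set \<Rightarrow> bool" where
  "has_long_run U \<longleftrightarrow> (\<exists>(i, a, b) \<in> runs U. a + 2 \<le> b)"

lemma path_adj_sym: "path_adj u v \<Longrightarrow> path_adj v u"
  unfolding path_adj_def by auto

lemma separated_sym: "separated X Y \<Longrightarrow> separated Y X"
  unfolding separated_def using path_adj_sym by blast

lemma separated_mono: "separated X Y \<Longrightarrow> X' \<subseteq> X \<Longrightarrow> Y' \<subseteq> Y \<Longrightarrow> separated X' Y'"
  unfolding separated_def by blast

lemma mem_interval [simp]: "p \<in> interval i a b \<longleftrightarrow> fst p = i \<and> a \<le> snd p \<and> snd p \<le> b"
  unfolding interval_def by simp

lemma interval_eq_image: "interval i a b = Pair i ` {a..b}"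
  unfolding interval_def by (auto simp: image_iff)

lemma finite_interval [simp]: "finite (interval i a b)"
  unfolding interval_eq_image by simp

lemma card_interval: "card (interval i a b) = Suc b - a"
  unfolding interval_eq_image by (simp add: card_image inj_on_def)

lemma is_run_endpoints: "is_run U i a b \<Longrightarrow> (i, a) \<in> U \<and> (i, b) \<in> U"
  unfolding is_run_def by auto

lemma finite_runs:
  assumes "finite U"
  shows "finite (runs U)"
proof (rule finite_subset)
  show "runs U \<subseteq> (\<lambda>(p, q). (fst p, snd p, snd q)) ` (U \<times> U)"
  proof
    fix r assume "r \<in> runs U"
    then obtain i a b where "r = (i, a, b)" "is_run U i a b"
      unfolding runs_def by blast
    then show "r \<in> (\<lambda>(p, q). (fst p, snd p, snd q)) ` (U \<times> U)"
      by (intro rev_image_eqI[of "((i, a), (i, b))"]) (auto dest: is_run_endpoints)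
  qed
  show "finite ((\<lambda>(p, q). (fst p, snd p, snd q)) ` (U \<times> U))"
    using assms by simp
qed

lemma path_core_subset: "path_core U \<subseteq> U"
  unfolding path_core_def by blast

lemma path_core_empty [simp]: "path_core {} = {}"
  unfolding path_core_def by simp

lemma path_core_Un: "separated X Y \<Longrightarrow> path_core (X \<union> Y) = path_core X \<union> path_core Y"
  unfolding path_core_def separated_def using path_adj_sym by blast

lemma path_core_interval: "path_core (interval i a b) = (if a < b then interval i a b else {})"
proof (cases "a < b")
  case True
  have "\<exists>w \<in> interval i a b. path_adj v w" if v: "v \<in> interval i a b" for v
  proof (cases "snd v < b")
    case True
    then show ?thesis
      using v by (intro bexI[of _ "(fst v, Suc (snd v))"]) (auto simp: path_adj_def)
  next
    case False
    then show ?thesis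
      using v \<open>a < b\<close> by (intro bexI[of _ "(fst v, b - 1)"]) (auto simp: path_adj_def)
  qed
  then show ?thesis
    using True unfolding path_core_def by auto
qed (auto simp: path_core_def path_adj_def)

lemma interval_subset_of_separated:
  assumes "separated X Y" "interval i a b \<subseteq> X \<union> Y" "(i, a) \<in> X"
  shows "interval i a b \<subseteq> X"
proof -
  have "a + k \<le> b \<longrightarrow> (i, a + k) \<in> X" for k
  proof (induction k)
    case (Suc k)
    show ?case
    proof
      assume "a + Suc k \<le> b"
      then have "(i, a + k) \<in> X" "(i, a + Suc k) \<in> X \<union> Y"
        using Suc assms(2) by (auto dest!: subsetD[of _ _ "(i, a + Suc k)"])
      moreover have "path_adj (i, a + k) (i, a + Suc k)"
        by (simp add: path_adj_def)
      ultimately show "(i, a + Suc k) \<in> X"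
        using assms(1) unfolding separated_def by blast
    qed
  qed (use assms in simp)
  then show ?thesis
    by (auto simp: subset_iff) (metis le_add_diff_inverse)
qed

lemma is_run_Un_separated:
  assumes "separated X Y" "is_run X i a b"
  shows "is_run (X \<union> Y) i a b"
proof -
  have "(i, a) \<in> X" "(i, b) \<in> X"
    using is_run_endpoints[OF assms(2)] by auto
  moreover have "path_adj (i, a) (i, a - 1)" if "a \<noteq> 0"
    using that by (simp add: path_adj_def)
  moreover have "path_adj (i, b) (i, Suc b)"
    by (simp add: path_adj_def)
  ultimately show ?thesis
    using assms unfolding is_run_def separated_def by blast
qed

lemma runs_Un:
  assumes sep: "separated X Y"
  shows "runs (X \<union> Y) = runs X \<union> runs Y"
proof
  show "runs X \<union> runs Y \<subseteq> runs (X \<union> Y)"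
    using is_run_Un_separated[OF sep] is_run_Un_separated[OF separated_sym[OF sep]]
    unfolding runs_def by (auto simp: Un_commute)
next
  have "is_run X i a b \<or> is_run Y i a b" if r: "is_run (X \<union> Y) i a b" for i a b
  proof -
    have "(i, a) \<in> X \<or> (i, a) \<in> Y"
      using is_run_endpoints[OF r] by simp
    then have "interval i a b \<subseteq> X \<or> interval i a b \<subseteq> Y"
      using r interval_subset_of_separated[OF sep] interval_subset_of_separated[OF separated_sym[OF sep]]
      unfolding is_run_def by (metis Un_commute)
    with r show ?thesis
      unfolding is_run_def by auto
  qed
  then show "runs (X \<union> Y) \<subseteq> runs X \<union> runs Y"
    unfolding runs_def by auto
qed

lemma runs_disjoint: "X \<inter> Y = {} \<Longrightarrow> runs X \<inter> runs Y = {}"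
  unfolding runs_def using is_run_endpoints by fastforce

lemma odd_runs_Un:
  assumes "finite X" "finite Y" "X \<inter> Y = {}" "separated X Y"
  shows "odd_runs (X \<union> Y) = odd_runs X + odd_runs Y"
  unfolding odd_runs_def runs_Un[OF assms(4)] Int_Un_distrib2
  using finite_runs[OF assms(1)] finite_runs[OF assms(2)] runs_disjoint[OF assms(3)]
  by (subst card_Un_disjoint) auto

lemma has_long_run_Un: "separated X Y \<Longrightarrow> has_long_run (X \<union> Y) \<longleftrightarrow> has_long_run X \<or> has_long_run Y"
  unfolding has_long_run_def by (auto simp: runs_Un)

lemma runs_interval:
  assumes "a \<le> b"
  shows "runs (interval i a b) = {(i, a, b)}"
proof -
  have "i' = i \<and> a' = a \<and> b' = b" if r: "is_run (interval i a b) i' a' b'" for i' a' b'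
  proof -
    have "(i', a') \<in> interval i a b" "(i', b') \<in> interval i a b"
      using is_run_endpoints[OF r] by auto
    moreover have "(i', a' - 1) \<notin> interval i a b" if "a' \<noteq> 0"
      using r that unfolding is_run_def by auto
    moreover have "(i', Suc b') \<notin> interval i a b"
      using r unfolding is_run_def by auto
    ultimately show ?thesis
      by (cases "a' = 0") auto
  qed
  moreover have "is_run (interval i a b) i a b"
    using assms unfolding is_run_def by auto
  ultimately show ?thesis
    unfolding runs_def by auto
qed

lemma runs_empty [simp]: "runs {} = {}"
  unfolding runs_def by (auto dest: is_run_endpoints)

lemma odd_runs_empty [simp]: "odd_runs {} = 0"
  unfolding odd_runs_def by simp

lemma odd_runs_interval: "a \<le> b \<Longrightarrow> odd_runs (interval i a b) = (if even (b - a) then 1 else 0)"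
  unfolding odd_runs_def by (simp add: runs_interval Int_insert_left)

lemma has_long_run_empty [simp]: "\<not> has_long_run {}"
  unfolding has_long_run_def by simp

lemma has_long_run_interval: "a \<le> b \<Longrightarrow> has_long_run (interval i a b) \<longleftrightarrow> a + 2 \<le> b"
  unfolding has_long_run_def by (simp add: runs_interval)

lemma card_path_core_interval: "card (path_core (interval i s t)) = (if s < t then Suc t - s else 0)"
  by (simp add: path_core_interval card_interval)

lemma odd_runs_path_core_interval:
  "odd_runs (path_core (interval i s t)) = (if s < t \<and> even (t - s) then 1 else 0)"
  by (simp add: path_core_interval odd_runs_interval)

lemma has_long_run_path_core_interval: "has_long_run (path_core (interval i s t)) \<longleftrightarrow> s + 2 \<le> t"
  by (simp add: path_core_interval has_long_run_interval)

lemma path_core_diff_run: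
  assumes core: "path_core U = U" and run: "is_run U i a b"
  shows "separated (U - interval i a b) (interval i a b)"
    and "path_core (U - interval i a b) = U - interval i a b"
proof -
  show sep: "separated (U - interval i a b) (interval i a b)"
    unfolding separated_def
  proof (intro ballI notI)
    fix u v assume u: "u \<in> U - interval i a b" and v: "v \<in> interval i a b" and adj: "path_adj u v"
    then have "u = (i, snd v - 1) \<and> snd v = a \<and> a \<noteq> 0 \<or> u = (i, Suc (snd v)) \<and> snd v = b"
      unfolding path_adj_def by (cases u) auto
    with u run show False
      unfolding is_run_def by auto
  qed
  show "path_core (U - interval i a b) = U - interval i a b"
    using core sep unfolding path_core_def separated_def by blast
qed

lemma path_core_after_move:
  assumes core: "path_core U = U" and run: "is_run U i a b" and j: "a \<le> j" "j \<le> b"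
  shows "path_core (U - {y \<in> U. y = (i, j) \<or> path_adj (i, j) y})
    = (U - interval i a b) \<union> path_core (interval i a (j - 2)) \<union> path_core (interval i (j + 2) b)"
proof -
  define Rest where "Rest = U - interval i a b"
  define L where "L = (if a + 2 \<le> j then interval i a (j - 2) else {})"
  define R where "R = (if j + 2 \<le> b then interval i (j + 2) b else {})"
  have "U - {y \<in> U. y = (i, j) \<or> path_adj (i, j) y} = Rest \<union> L \<union> R"
  proof (rule set_eqI)
    fix v :: "nat \<times> nat"
    obtain i' t where v: "v = (i', t)" by (cases v)
    have "interval i a b \<subseteq> U" "(i, Suc j) \<in> U \<Longrightarrow> j < b" "Suc t = j \<Longrightarrow> (i, t) \<in> U \<Longrightarrow> a < j"
      using run j unfolding is_run_def by (auto simp: le_less)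
    then show "v \<in> U - {y \<in> U. y = (i, j) \<or> path_adj (i, j) y} \<longleftrightarrow> v \<in> Rest \<union> L \<union> R"
      using j unfolding v Rest_def L_def R_def path_adj_def
      by (cases "i' = i \<and> a \<le> t \<and> t \<le> b") (auto simp: subset_iff)
  qed
  moreover have "path_core (Rest \<union> L \<union> R) = Rest \<union> path_core L \<union> path_core R"
  proof -
    have "L \<subseteq> interval i a b" "R \<subseteq> interval i a b" "separated L R"
      unfolding L_def R_def separated_def path_adj_def using j by auto
    with path_core_diff_run[OF core run] show ?thesis
      unfolding Rest_def
      by (metis path_core_Un separated_mono Un_least order_refl sup_assoc)
  qed
  moreover have "path_core L = path_core (interval i a (j - 2))"
    "path_core R = path_core (interval i (j + 2) b)"
    unfolding L_def R_def by (auto simp: path_core_interval)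
  ultimately show ?thesis
    unfolding Rest_def by simp
qed

lemma interval_insert_left:
  "0 < a \<Longrightarrow> a \<le> Suc b \<Longrightarrow> interval i (a - 1) b = insert (i, a - 1) (interval i a b)"
  by (auto simp: prod_eq_iff)

lemma interval_insert_right: "a \<le> Suc b \<Longrightarrow> interval i a (Suc b) = insert (i, Suc b) (interval i a b)"
  by (auto simp: prod_eq_iff)

lemma interval_split: "a \<le> j \<Longrightarrow> j \<le> b \<Longrightarrow> interval i a b = interval i a j \<union> interval i j b"
  by auto

lemma run_containing:
  assumes fin: "finite U" and v: "(i, j) \<in> U"
  obtains a b where "is_run U i a b" "a \<le> j" "j \<le> b"
proof -
  define S where "S = {s. s \<le> j \<and> interval i s j \<subseteq> U}"
  define T where "T = {t. j \<le> t \<and> interval i j t \<subseteq> U}"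
  have "interval i j j = {(i, j)}"
    by (auto simp: prod_eq_iff)
  then have "j \<in> S" "j \<in> T"
    using v unfolding S_def T_def by simp_all
  have "finite S"
    by (rule finite_subset[of _ "{..j}"]) (auto simp: S_def)
  have "T \<subseteq> snd ` U"
  proof
    fix t assume "t \<in> T"
    then have "(i, t) \<in> U"
      unfolding T_def by auto
    then show "t \<in> snd ` U"
      by (rule rev_image_eqI) simp
  qed
  then have "finite T"
    using fin finite_surj by blast
  define a where "a = Min S"
  define b where "b = Max T"
  have a: "a \<le> j" "interval i a j \<subseteq> U" "\<And>s. s \<in> S \<Longrightarrow> a \<le> s"
    using Min_in[OF \<open>finite S\<close>] \<open>j \<in> S\<close> \<open>finite S\<close> unfolding a_def S_def by auto
  have b: "j \<le> b" "interval i j b \<subseteq> U" "\<And>t. t \<in> T \<Longrightarrow> t \<le> b"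
    using Max_in[OF \<open>finite T\<close>] \<open>j \<in> T\<close> \<open>finite T\<close> unfolding b_def T_def by auto
  have "is_run U i a b"
    unfolding is_run_def
  proof (intro conjI)
    show "a \<le> b" "interval i a b \<subseteq> U"
      using a b interval_split[of a j b i] by auto
    show "a = 0 \<or> (i, a - 1) \<notin> U"
    proof (rule ccontr)
      assume "\<not> (a = 0 \<or> (i, a - 1) \<notin> U)"
      then have "a - 1 \<in> S"
        using a(1,2) interval_insert_left[of a j i] unfolding S_def by auto
      with a(3) \<open>\<not> (a = 0 \<or> _)\<close> show False
        by fastforce
    qed
    show "(i, Suc b) \<notin> U"
    proof
      assume "(i, Suc b) \<in> U"
      then have "Suc b \<in> T"
        using b(1,2) interval_insert_right[of j b i] unfolding T_def by auto
      with b(3) show False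
        by fastforce
    qed
  qed
  with a b show thesis
    using that by blast
qed

lemma run_nontrivial:
  assumes "path_core U = U" and run: "is_run U i a b"
  shows "a < b"
proof (rule ccontr)
  assume "\<not> a < b"
  then have "a = b"
    using run unfolding is_run_def by simp
  obtain i' t where "(i', t) \<in> U" "path_adj (i, a) (i', t)"
    using assms is_run_endpoints[OF run] unfolding path_core_def by force
  then have "(i, Suc a) \<in> U \<or> (a \<noteq> 0 \<and> (i, a - 1) \<in> U)"
    unfolding path_adj_def by auto
  with run \<open>a = b\<close> show False
    unfolding is_run_def by auto
qed

section \<open>Playing on a run\<close>

text \<open>Playing a vertex of a run with \<open>l\<close> run vertices to its left and \<open>r\<close> to its right: the part
  left of the closed neighbourhood keeps its \<open>l - 1\<close> vertices if \<open>l \<ge> 3\<close> and becomes isolated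
  otherwise, and likewise on the right.\<close>

definition removed_count :: "nat \<Rightarrow> nat \<Rightarrow> int" where
  "removed_count l r = int (l + r + 1) - (if 3 \<le> l then int l - 1 else 0) - (if 3 \<le> r then int r - 1 else 0)"

definition odd_runs_change :: "nat \<Rightarrow> nat \<Rightarrow> int" where
  "odd_runs_change l r = (if 3 \<le> l \<and> even l then 1 else 0) + (if 3 \<le> r \<and> even r then 1 else 0)
     - (if even (l + r) then 1 else 0)"

lemma nat_small_cases: "(n::nat) = 0 \<or> n = 1 \<or> n = 2 \<or> 3 \<le> n"
  by auto

lemma removed_count_add_change_le:
  "1 \<le> l + r \<Longrightarrow> removed_count l r + odd_runs_change l r \<le> (if 2 \<le> l + r then 4 else 2)"
  using nat_small_cases[of l] nat_small_cases[of r]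
  unfolding removed_count_def odd_runs_change_def by auto

lemma removed_count_sub_change_ge:
  "l + r \<le> 2 \<or> l = 2 \<or> r = 2 \<or> (l = 1 \<and> odd r) \<Longrightarrow>
    (if 2 \<le> l + r then 4 else 2) \<le> removed_count l r - odd_runs_change l r"
  using nat_small_cases[of l] nat_small_cases[of r]
  unfolding removed_count_def odd_runs_change_def by auto

lemma alternating_parity:
  assumes "\<And>t. a \<le> t \<Longrightarrow> t < b \<Longrightarrow> P (Suc t) \<longleftrightarrow> \<not> P t" "a + k \<le> b"
  shows "P (a + k) \<longleftrightarrow> (P a \<longleftrightarrow> even k)"
  using assms(2) by (induction k) (auto simp: assms(1))

lemma exists_good_reply_on_run:
  assumes "a < b" and alternating: "\<And>t. a \<le> t \<Longrightarrow> t < b \<Longrightarrow> P (Suc t) \<longleftrightarrow> \<not> P t"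
  obtains j where "a \<le> j" "j \<le> b" "P j"
    "(if a + 2 \<le> b then 4 else 2) \<le> removed_count (j - a) (b - j) - odd_runs_change (j - a) (b - j)"
proof -
  note choose = that
  note parity = alternating_parity[of a b P, OF alternating]
  have reply: thesis if "a \<le> j" "j \<le> b" "P j"
    "b \<le> a + 2 \<or> j = a + 2 \<or> j + 2 = b \<or> (j = a + 1 \<and> odd (b - j))" for j
  proof (rule choose)
    have cond: "(j - a) + (b - j) \<le> 2 \<or> j - a = 2 \<or> b - j = 2 \<or> (j - a = 1 \<and> odd (b - j))"
      using that by auto
    have long: "2 \<le> (j - a) + (b - j) \<longleftrightarrow> a + 2 \<le> b"
      using that by auto
    show "(if a + 2 \<le> b then 4 else 2)
        \<le> removed_count (j - a) (b - j) - odd_runs_change (j - a) (b - j)"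
      using removed_count_sub_change_ge[OF cond] unfolding long .
  qed fact+
  consider "b \<le> a + 2" | "a + 3 \<le> b" "P (a + 2)" | "a + 3 \<le> b" "\<not> P (a + 2)"
    by linarith
  then show thesis
  proof cases
    case 1
    then show thesis
      using parity[of 1] assms(1) reply[of a] reply[of "a + 1"] by auto
  next
    case 2
    then show thesis
      using reply[of "a + 2"] by auto
  next
    case 3
    then have "P (a + 1)" "\<not> P a"
      using parity[of 1] parity[of 2] by auto
    show thesis
    proof (cases "odd (b - a - 1)")
      case True
      then show thesis
        using reply[of "a + 1"] \<open>P (a + 1)\<close> 3 by auto
    next
      case False
      then have "P (a + (b - 2 - a))"
        using parity[of "b - 2 - a"] \<open>\<not> P a\<close> 3 by auto
      moreover have "a \<le> b - 2" "Suc (Suc (b - 2)) = b"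
        using 3 by auto
      ultimately show thesis
        using reply[of "b - 2"] by simp
    qed
  qed
qed

lemma move_on_run:
  assumes fin: "finite U" and core: "path_core U = U" and run: "is_run U i a b"
    and j: "a \<le> j" "j \<le> b"
  defines "W \<equiv> path_core (U - {y \<in> U. y = (i, j) \<or> path_adj (i, j) y})"
  shows "int (card U) - int (card W) = removed_count (j - a) (b - j)"
    and "int (odd_runs W) - int (odd_runs U) = odd_runs_change (j - a) (b - j)"
    and "has_long_run W \<Longrightarrow> has_long_run U"
proof -
  define Rest where "Rest = U - interval i a b"
  define L where "L = path_core (interval i a (j - 2))"
  define R where "R = path_core (interval i (j + 2) b)"
  have W: "W = Rest \<union> (L \<union> R)"
    unfolding W_def path_core_after_move[OF core run j] Rest_def L_def R_def by blast
  have U: "U = Rest \<union> interval i a b"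
    using run unfolding Rest_def is_run_def by blast
  have sep: "separated Rest (interval i a b)"
    unfolding Rest_def by (rule path_core_diff_run(1)[OF core run])
  have LR: "L \<union> R \<subseteq> interval i a b" "separated L R" "L \<inter> R = {}"
    using j unfolding L_def R_def path_core_interval separated_def path_adj_def by auto
  have finRest: "finite Rest"
    using fin unfolding Rest_def by simp
  have dis: "Rest \<inter> interval i a b = {}" "Rest \<inter> (L \<union> R) = {}"
    using LR(1) unfolding Rest_def by auto
  have sep': "separated Rest (L \<union> R)"
    using separated_mono[OF sep order_refl LR(1)] .
  have finLR: "finite L" "finite R"
    unfolding L_def R_def using finite_subset[OF path_core_subset] by auto
  have card: "card U = card Rest + (Suc b - a)" "card W = card Rest + (card L + card R)"
    using dis finRest finLR LR(3) by (simp_all add: U W card_Un_disjoint card_interval)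
  have odd: "odd_runs U = odd_runs Rest + (if even (b - a) then 1 else 0)"
    "odd_runs W = odd_runs Rest + (odd_runs L + odd_runs R)"
    using dis finRest finLR LR j unfolding U W
    by (simp_all add: odd_runs_Un[OF _ _ _ sep] odd_runs_Un[OF _ _ _ sep'] odd_runs_Un odd_runs_interval)
  obtain l r where l: "j = a + l" and r: "b = j + r"
    using j le_Suc_ex by blast
  have l3: "a < a + l - 2 \<longleftrightarrow> 3 \<le> l"
    by arith
  show "int (card U) - int (card W) = removed_count (j - a) (b - j)"
    unfolding card L_def R_def card_path_core_interval removed_count_def l r
    by (simp add: l3)
  show "int (odd_runs W) - int (odd_runs U) = odd_runs_change (j - a) (b - j)"
    unfolding odd L_def R_def odd_runs_path_core_interval odd_runs_change_def l r
    by (auto simp: l3)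
  have "has_long_run W \<longleftrightarrow> has_long_run Rest \<or> has_long_run L \<or> has_long_run R"
    unfolding W using has_long_run_Un[OF sep'] has_long_run_Un[OF LR(2)] by simp
  moreover have "has_long_run U \<longleftrightarrow> has_long_run Rest \<or> a + 2 \<le> b"
    unfolding U using has_long_run_Un[OF sep] has_long_run_interval j by simp
  ultimately show "has_long_run W \<Longrightarrow> has_long_run U"
    using j unfolding L_def R_def has_long_run_path_core_interval by auto
qed

section \<open>Path forests\<close>

definition run_bonus :: "(nat \<times> nat) set \<Rightarrow> int" where
  "run_bonus U = (if U = {} then 0 else if has_long_run U then 4 else 2)"

definition potential :: "(nat \<times> nat) set \<Rightarrow> int" where
  "potential U = int (odd_runs U) + run_bonus U"

locale path_forest =
  fixes G :: "(nat \<times> nat) bgraph"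
  assumes finite_verts: "finite (verts G)"
    and adj_iff: "adj G u v \<longleftrightarrow> u \<in> verts G \<and> v \<in> verts G \<and> path_adj u v"
    and colours_alternate: "u \<in> verts G \<Longrightarrow> v \<in> verts G \<Longrightarrow> path_adj u v \<Longrightarrow> blk G u \<noteq> blk G v"

sublocale path_forest \<subseteq> bipartite_graph
proof
  fix u v assume "adj G u v"
  then show "adj G v u" "blk G u \<noteq> blk G v"
    using colours_alternate path_adj_sym by (auto simp: adj_iff)
qed

context path_forest
begin

lemma path_forest_swap_colours: "path_forest (swap_colours G)"
  by unfold_locales (simp_all add: finite_verts adj_iff colours_alternate)

lemma core_eq_path_core: "U \<subseteq> verts G \<Longrightarrow> core G U = path_core U"
  unfolding core_def path_core_def isolated_def by (auto simp: adj_iff)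

lemma play_eq_path_core:
  assumes "U \<subseteq> verts G" "(i, j) \<in> U"
  shows "play G U (i, j) = path_core (U - {y \<in> U. y = (i, j) \<or> path_adj (i, j) y})"
proof -
  have "nbhd G U (i, j) = {y \<in> U. y = (i, j) \<or> path_adj (i, j) y}"
    using assms unfolding nbhd_def by (auto simp: adj_iff)
  moreover have "U - nbhd G U (i, j) \<subseteq> verts G"
    using assms by blast
  ultimately show ?thesis
    by (simp add: play_eq_core core_eq_path_core)
qed

lemma move_on_run_values:
  assumes U: "U \<subseteq> verts G" "core G U = U" and run: "is_run U i a b" and j: "a \<le> j" "j \<le> b"
  shows "int (card (removed G U (i, j))) = removed_count (j - a) (b - j)"
    and "int (odd_runs (play G U (i, j))) - int (odd_runs U) = odd_runs_change (j - a) (b - j)"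
    and "run_bonus (play G U (i, j)) \<le> run_bonus U"
proof -
  have fin: "finite U"
    using U(1) finite_verts finite_subset by blast
  have core: "path_core U = U"
    using U core_eq_path_core by simp
  have "(i, j) \<in> U"
    using run j unfolding is_run_def by auto
  note move = move_on_run[OF fin core run j, folded play_eq_path_core[OF U(1) this]]
  show "int (card (removed G U (i, j))) = removed_count (j - a) (b - j)"
    using move(1) card_removed[OF fin] by simp
  show "int (odd_runs (play G U (i, j))) - int (odd_runs U) = odd_runs_change (j - a) (b - j)"
    using move(2) .
  have "U \<noteq> {}"
    using run is_run_endpoints by blast
  with move(3) show "run_bonus (play G U (i, j)) \<le> run_bonus U"
    unfolding run_bonus_def by auto
qed

lemma run_of_vertex:
  assumes "U \<subseteq> verts G" "x \<in> U"
  obtains i a j b where "x = (i, j)" "is_run U i a b" "a \<le> j" "j \<le> b"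
proof -
  obtain i j where x: "x = (i, j)"
    by (cases x)
  have "finite U"
    using assms(1) finite_verts finite_subset by blast
  moreover have "(i, j) \<in> U"
    using assms(2) x by simp
  ultimately obtain a b where "is_run U i a b" "a \<le> j" "j \<le> b"
    by (rule run_containing)
  with x show thesis
    by (rule that)
qed

lemma run_bonus_play_le:
  assumes "U \<subseteq> verts G" "core G U = U" "x \<in> U"
  shows "run_bonus (play G U x) \<le> run_bonus U"
proof -
  obtain i a j b where "x = (i, j)" "is_run U i a b" "a \<le> j" "j \<le> b"
    by (rule run_of_vertex[OF assms(1,3)])
  then show ?thesis
    using move_on_run_values(3)[OF assms(1,2)] by simp
qed

lemma left_move_bound:
  assumes U: "U \<subseteq> verts G" "core G U = U" and x: "x \<in> U"
  shows "int (card (removed G U x)) + int (odd_runs (play G U x)) \<le> int (odd_runs U) + run_bonus U"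
proof -
  obtain i a j b where ij: "x = (i, j)" and run: "is_run U i a b" "a \<le> j" "j \<le> b"
    by (rule run_of_vertex[OF U(1) x])
  have "a < b"
    using run_nontrivial[OF _ run(1)] U core_eq_path_core by simp
  have lr: "1 \<le> (j - a) + (b - j)" "2 \<le> (j - a) + (b - j) \<longleftrightarrow> a + 2 \<le> b"
    using \<open>a < b\<close> run(2,3) by auto
  have "has_long_run U" if "a + 2 \<le> b"
    using run(1) that unfolding has_long_run_def runs_def by blast
  then have "(if 2 \<le> (j - a) + (b - j) then 4 else 2) \<le> run_bonus U"
    using x lr(2) unfolding run_bonus_def by auto
  then show ?thesis
    using removed_count_add_change_le[OF lr(1)] move_on_run_values(1,2)[OF U run]
    unfolding ij by linarith
qed

lemma right_reply_bound:
  assumes U: "U \<subseteq> verts G" "core G U = U" "U \<noteq> {}"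
  obtains y where "y \<in> U" "\<not> blk G y"
    "run_bonus U + int (odd_runs (play G U y)) \<le> int (card (removed G U y)) + int (odd_runs U)"
proof -
  obtain i a b where run: "is_run U i a b" and long: "has_long_run U \<Longrightarrow> a + 2 \<le> b"
  proof (cases "has_long_run U")
    case True
    then show thesis
      using that unfolding has_long_run_def runs_def by blast
  next
    case False
    obtain x where "x \<in> U"
      using U(3) by blast
    then obtain i a j b where "x = (i, j)" "is_run U i a b"
      by (rule run_of_vertex[OF U(1)])
    with False show thesis
      using that by blast
  qed
  have "a < b"
    using run_nontrivial[OF _ run] U core_eq_path_core by simp
  have "\<not> blk G (i, Suc t) \<longleftrightarrow> \<not> \<not> blk G (i, t)" if "a \<le> t" "t < b" for t
  proof -
    have "(i, t) \<in> interval i a b" "(i, Suc t) \<in> interval i a b"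
      using that by auto
    then have "(i, t) \<in> verts G" "(i, Suc t) \<in> verts G"
      using run U(1) unfolding is_run_def by blast+
    then show ?thesis
      using colours_alternate[of "(i, t)" "(i, Suc t)"] by (auto simp: path_adj_def)
  qed
  then obtain j where j: "a \<le> j" "j \<le> b" "\<not> blk G (i, j)"
    and bound: "(if a + 2 \<le> b then 4 else 2) \<le> removed_count (j - a) (b - j) - odd_runs_change (j - a) (b - j)"
    using exists_good_reply_on_run[OF \<open>a < b\<close>, of "\<lambda>t. \<not> blk G (i, t)"] by blast
  have "run_bonus U \<le> (if a + 2 \<le> b then 4 else 2)"
    using long U(3) unfolding run_bonus_def by auto
  moreover have "(i, j) \<in> U"
    using run j unfolding is_run_def by auto
  ultimately show thesis
    using that[of "(i, j)"] j(3) bound move_on_run_values(1,2)[OF U(1,2) run j(1,2)] by simp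
qed

lemma left_value_le_potential: "U \<subseteq> verts G \<Longrightarrow> core G U = U \<Longrightarrow> left_value G U \<le> potential U"
proof (induction "card U" arbitrary: U rule: less_induct)
  case less
  have fin: "finite U"
    using less.prems(1) finite_verts finite_subset by blast
  show ?case
  proof (cases "\<exists>x\<in>U. blk G x")
    case False
    then show ?thesis
      using fin by (simp add: left_value_no_black potential_def run_bonus_def)
  next
    case True
    obtain x where x: "x \<in> U" "blk G x"
      and val_U: "left_value G U = int (card (removed G U x)) + right_value G (play G U x)"
      by (rule left_value_attained[OF fin True])
    define W where "W = play G U x"
    have W: "W \<subseteq> verts G" "core G W = W" "finite W" "card W < card U"
      using less.prems(1) play_subset[of G U x] core_play finite_play[OF fin] card_play_less[OF fin x(1)]
      unfolding W_def by auto
    have left: "int (card (removed G U x)) + int (odd_runs W) \<le> int (odd_runs U) + run_bonus U"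
      using left_move_bound[OF less.prems x(1)] unfolding W_def .
    show ?thesis
    proof (cases "W = {}")
      case True
      then show ?thesis
        using val_U left unfolding W_def potential_def by (simp add: right_value_no_white)
    next
      case False
      obtain y where y: "y \<in> W" "\<not> blk G y"
        and right: "run_bonus W + int (odd_runs (play G W y)) \<le> int (card (removed G W y)) + int (odd_runs W)"
        by (rule right_reply_bound[OF W(1,2) False])
      have "card (play G W y) < card U"
        using card_play_less[OF W(3) y(1), of G] W(4) by simp
      then have "left_value G (play G W y) \<le> potential (play G W y)"
        by (rule less.hyps) (use W(1) play_subset[of G W y] core_play in auto)
      then show ?thesis
        using val_U left right right_value_le[OF W(3) y] run_bonus_play_le[OF W(1,2) y(1)]
        unfolding W_def potential_def by linarith
    qed
  qed
qed

lemma right_value_ge_neg_potential: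
  assumes "U \<subseteq> verts G" "core G U = U"
  shows "- potential U \<le> right_value G U"
proof -
  interpret swapped: path_forest "swap_colours G"
    by (rule path_forest_swap_colours)
  have "left_value (swap_colours G) U \<le> potential U"
    using swapped.left_value_le_potential assms by simp
  moreover have "finite U"
    using assms(1) finite_verts finite_subset by blast
  ultimately show ?thesis
    using left_value_swap_colours by fastforce
qed

end

section \<open>Sums of segments\<close>

abbreviation segment_sum :: "int list \<Rightarrow> (nat \<times> nat) bgraph" where
  "segment_sum ns \<equiv> gsum (map segment ns)"

lemma verts_segment_sum:
  "verts (segment_sum ns) = {(i, v). i < length ns \<and> 1 \<le> v \<and> v \<le> nat \<bar>ns ! i\<bar>}"
  unfolding gsum_def segment_def by auto

lemma adj_segment_sum:
  "adj (segment_sum ns) (i, v) (j, w) \<longleftrightarrow> i = j \<and> i < length ns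
     \<and> 1 \<le> v \<and> v \<le> nat \<bar>ns ! i\<bar> \<and> 1 \<le> w \<and> w \<le> nat \<bar>ns ! i\<bar> \<and> (w = Suc v \<or> v = Suc w)"
  unfolding gsum_def segment_def by auto

lemma blk_segment_sum:
  "i < length ns \<Longrightarrow> blk (segment_sum ns) (i, v) \<longleftrightarrow> (if ns ! i \<ge> 0 then odd v else even v)"
  unfolding gsum_def segment_def by auto

lemma path_forest_segment_sum: "path_forest (segment_sum ns)"
proof
  have "verts (segment_sum ns) = Sigma {..<length ns} (\<lambda>i. {1..nat \<bar>ns ! i\<bar>})"
    unfolding verts_segment_sum by auto
  then show "finite (verts (segment_sum ns))"
    by simp
  show "adj (segment_sum ns) u v \<longleftrightarrow> u \<in> verts (segment_sum ns) \<and> v \<in> verts (segment_sum ns) \<and> path_adj u v"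
    for u v
    by (cases u; cases v) (auto simp: adj_segment_sum verts_segment_sum path_adj_def)
  show "blk (segment_sum ns) u \<noteq> blk (segment_sum ns) v"
    if "u \<in> verts (segment_sum ns)" "v \<in> verts (segment_sum ns)" "path_adj u v" for u v
  proof -
    obtain i x j y where uv: "u = (i, x)" "v = (j, y)"
      by (cases u; cases v)
    have "i = j" "i < length ns" "y = Suc x \<or> x = Suc y"
      using that uv unfolding path_adj_def verts_segment_sum by auto
    then show ?thesis
      using uv blk_segment_sum by auto
  qed
qed

lemma isolated_segment_sum:
  assumes "(i, v) \<in> verts (segment_sum ns)"
    and "isolated (segment_sum ns) (verts (segment_sum ns)) (i, v)"
  shows "nat \<bar>ns ! i\<bar> = 1"
proof (rule ccontr)
  assume "nat \<bar>ns ! i\<bar> \<noteq> 1"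
  moreover have "i < length ns" "1 \<le> v" "v \<le> nat \<bar>ns ! i\<bar>"
    using assms(1) unfolding verts_segment_sum by auto
  ultimately have "(i, Suc v) \<in> verts (segment_sum ns) \<and> adj (segment_sum ns) (i, v) (i, Suc v)
      \<or> (i, v - 1) \<in> verts (segment_sum ns) \<and> adj (segment_sum ns) (i, v) (i, v - 1)"
    unfolding verts_segment_sum adj_segment_sum by auto
  with assms(2) show False
    unfolding isolated_def by blast
qed

lemma core_segment_sum:
  "core (segment_sum ns) (verts (segment_sum ns))
     = {(i, v). i < length ns \<and> 1 \<le> v \<and> v \<le> nat \<bar>ns ! i\<bar> \<and> 2 \<le> nat \<bar>ns ! i\<bar>}"
proof -
  have "(i, v) \<in> core (segment_sum ns) (verts (segment_sum ns))
      \<longleftrightarrow> i < length ns \<and> 1 \<le> v \<and> v \<le> nat \<bar>ns ! i\<bar> \<and> 2 \<le> nat \<bar>ns ! i\<bar>" for i v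
  proof
    assume "(i, v) \<in> core (segment_sum ns) (verts (segment_sum ns))"
    then obtain j w where "adj (segment_sum ns) (i, v) (j, w)"
      unfolding core_def isolated_def by auto
    then show "i < length ns \<and> 1 \<le> v \<and> v \<le> nat \<bar>ns ! i\<bar> \<and> 2 \<le> nat \<bar>ns ! i\<bar>"
      unfolding adj_segment_sum by auto
  next
    assume "i < length ns \<and> 1 \<le> v \<and> v \<le> nat \<bar>ns ! i\<bar> \<and> 2 \<le> nat \<bar>ns ! i\<bar>"
    then show "(i, v) \<in> core (segment_sum ns) (verts (segment_sum ns))"
      using isolated_segment_sum unfolding core_def verts_segment_sum by fastforce
  qed
  then show ?thesis
    by auto
qed

lemma odd_runs_core_segment_sum:
  "odd_runs (core (segment_sum ns) (verts (segment_sum ns)))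
     \<le> card {i. i < length ns \<and> 2 \<le> nat \<bar>ns ! i\<bar> \<and> odd (nat \<bar>ns ! i\<bar>)}"
proof -
  let ?C = "core (segment_sum ns) (verts (segment_sum ns))"
  let ?S = "{i. i < length ns \<and> 2 \<le> nat \<bar>ns ! i\<bar> \<and> odd (nat \<bar>ns ! i\<bar>)}"
  have "runs ?C \<inter> {(i, a, b). even (b - a)} \<subseteq> (\<lambda>i. (i, 1, nat \<bar>ns ! i\<bar>)) ` ?S"
  proof clarify
    fix i a b assume run: "(i, a, b) \<in> runs ?C" and "even (b - a)"
    then have run: "is_run ?C i a b"
      unfolding runs_def by simp
    then have i: "i < length ns" "2 \<le> nat \<bar>ns ! i\<bar>" "1 \<le> a" "b \<le> nat \<bar>ns ! i\<bar>" "a \<le> b"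
      using is_run_endpoints[OF run] unfolding core_segment_sum is_run_def by auto
    have "(i, a - 1) \<notin> ?C" "(i, Suc b) \<notin> ?C"
      using run i(3) unfolding is_run_def by auto
    then have "a = 1" "b = nat \<bar>ns ! i\<bar>"
      using i unfolding core_segment_sum by auto
    with \<open>even (b - a)\<close> \<open>i < length ns\<close> \<open>2 \<le> nat \<bar>ns ! i\<bar>\<close>
    show "(i, a, b) \<in> (\<lambda>i. (i, 1, nat \<bar>ns ! i\<bar>)) ` ?S"
      by auto
  qed
  then have "odd_runs ?C \<le> card ((\<lambda>i. (i, 1::nat, nat \<bar>ns ! i\<bar>)) ` ?S)"
    unfolding odd_runs_def by (intro card_mono) auto
  also have "\<dots> \<le> card ?S"
    by (rule card_image_le) simp
  finally show ?thesis .
qed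

lemma credit_segment_sum:
  "\<bar>credit (segment_sum ns) (verts (segment_sum ns))\<bar> \<le> int (card {i. i < length ns \<and> nat \<bar>ns ! i\<bar> = 1})"
proof -
  let ?G = "segment_sum ns"
  let ?I = "{v \<in> verts ?G. isolated ?G (verts ?G) v}"
  let ?S = "{i. i < length ns \<and> nat \<bar>ns ! i\<bar> = 1}"
  have "?I \<subseteq> (\<lambda>i. (i, 1)) ` ?S"
  proof
    fix u assume u: "u \<in> ?I"
    obtain i v where uv: "u = (i, v)"
      by (cases u)
    have "nat \<bar>ns ! i\<bar> = 1"
      using isolated_segment_sum[of i v ns] u unfolding uv by blast
    moreover have "i < length ns" "1 \<le> v" "v \<le> nat \<bar>ns ! i\<bar>"
      using u unfolding uv verts_segment_sum by auto
    ultimately show "u \<in> (\<lambda>i. (i, 1)) ` ?S"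
      unfolding uv by auto
  qed
  then have "card ?I \<le> card ((\<lambda>i. (i, 1::nat)) ` ?S)"
    by (intro card_mono) auto
  also have "\<dots> \<le> card ?S"
    by (rule card_image_le) simp
  finally have "card ?I \<le> card ?S" .
  moreover have "finite ?I"
    using path_forest.finite_verts[OF path_forest_segment_sum] by simp
  then have "card {v \<in> verts ?G. isolated ?G (verts ?G) v \<and> blk ?G v} \<le> card ?I"
    "card {v \<in> verts ?G. isolated ?G (verts ?G) v \<and> \<not> blk ?G v} \<le> card ?I"
    by (simp_all add: card_mono Collect_mono)
  ultimately show ?thesis
    unfolding credit_def by linarith
qed

lemma card_odd_split:
  "card {i. i < length ns \<and> odd (ns ! i)}
     = card {i. i < length ns \<and> nat \<bar>ns ! i\<bar> = 1}
     + card {i. i < length ns \<and> 2 \<le> nat \<bar>ns ! i\<bar> \<and> odd (nat \<bar>ns ! i\<bar>)}"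
proof -
  have "odd (ns ! i) \<longleftrightarrow> odd (nat \<bar>ns ! i\<bar>)" for i
    by (simp add: even_nat_iff)
  moreover have "odd m \<longleftrightarrow> m = 1 \<or> 2 \<le> m \<and> odd m" for m :: nat
    by (cases m) auto
  ultimately have "odd (ns ! i) \<longleftrightarrow> nat \<bar>ns ! i\<bar> = 1 \<or> 2 \<le> nat \<bar>ns ! i\<bar> \<and> odd (nat \<bar>ns ! i\<bar>)" for i
    by blast
  then have "{i. i < length ns \<and> odd (ns ! i)}
      = {i. i < length ns \<and> nat \<bar>ns ! i\<bar> = 1}
      \<union> {i. i < length ns \<and> 2 \<le> nat \<bar>ns ! i\<bar> \<and> odd (nat \<bar>ns ! i\<bar>)}"
    by auto
  moreover have "{i. i < length ns \<and> nat \<bar>ns ! i\<bar> = 1}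
      \<inter> {i. i < length ns \<and> 2 \<le> nat \<bar>ns ! i\<bar> \<and> odd (nat \<bar>ns ! i\<bar>)} = {}"
    by auto
  ultimately show ?thesis
    by (simp add: card_Un_disjoint)
qed

theorem mainTheorem16:
  fixes ns :: "int list" and k :: nat
  assumes "k = card {i. i < length ns \<and> odd (ns ! i)}"
  shows "- int k - 4 \<le> Rs (gsum (map segment ns))
       \<and> Rs (gsum (map segment ns)) \<le> Ls (gsum (map segment ns))
       \<and> Ls (gsum (map segment ns)) \<le> int k + 4"
proof -
  let ?G = "gsum (map segment ns)"
  let ?C = "core ?G (verts ?G)"
  interpret path_forest ?G
    by (rule path_forest_segment_sum)
  have C: "?C \<subseteq> verts ?G" "core ?G ?C = ?C" "finite ?C"
    using core_subset[of ?G "verts ?G"] core_idem finite_subset[OF _ finite_verts] by auto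
  have "right_value ?G ?C \<le> left_value ?G ?C"
    using right_value_le_left_value[OF C(3,2)] .
  moreover have "left_value ?G ?C \<le> potential ?C" "- potential ?C \<le> right_value ?G ?C"
    using left_value_le_potential[OF C(1,2)] right_value_ge_neg_potential[OF C(1,2)] by auto
  moreover have "potential ?C \<le> int (card {i. i < length ns \<and> 2 \<le> nat \<bar>ns ! i\<bar> \<and> odd (nat \<bar>ns ! i\<bar>)}) + 4"
    using odd_runs_core_segment_sum[of ns] unfolding potential_def run_bonus_def by auto
  ultimately show ?thesis
    using Ls_Rs_eq_values[OF finite_verts] credit_segment_sum[of ns] card_odd_split[of ns] assms
    by (simp add: abs_le_iff)
qed

end
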